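(* Let $\mathcal{M}$ be any mechanism that always returns a \textsc{Min-Max} outcome (an outcome minimizing $\max_{i\in N}d_i(\mathbf{o})$). Then $\mathcal{M}$ is not strategyproof: there exist an instance $(N,P,T,(\mathbf{D}_i)_{i\in N})$, an agent $i\in N$ and a disapproval vector $\mathbf{D}'_i$ with $d_i(\mathcal{M}(\mathcal{D}_{-i},\mathbf{D}'_i))<d_i(\mathcal{M}(\mathcal{D}_{-i},\mathbf{D}_i))$.
   Context: An instance is $(N,P,T,(\mathbf{D}_i)_{i\in N})$ with agents $N=[n]$, projects $P$, timesteps $T=[\ell]$, and disapproval vectors $\mathbf{D}_i=(D_{i1},\dots,D_{i\ell})$, $D_{ik}\subseteq P$. An outcome is $\mathbf{o}\in P^\ell$ and $d_i(\mathbf{o})=|\{k\in T:o_k\in D_{ik}\}|$, computed with respect to $i$'s true disapproval vector. A mechanism maps each instance to an outcome; it is strategyproof if for every instance, every agent $i$ and every $\mathbf{D}'_i$, $d_i(\mathcal{M}(\mathcal{D}_{-i},\mathbf{D}_i))\le d_i(\mathcal{M}(\mathcal{D}_{-i},\mathbf{D}'_i))$, where $\mathcal{D}_{-i}$ is the list of disapproval vectors of the agents other than $i$. *)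

theory Defs
  imports Main
begin

text \<open>Agents are 0..n-1, timesteps are 0..l-1 (a relabelling of [n] and [l]).
  Projects are natural numbers; an instance fixes a finite nonempty project set P.
  A disapproval profile is D :: agent => timestep => project set.\<close>

type_synonym profile = "nat \<Rightarrow> nat \<Rightarrow> nat set"
type_synonym outcome = "nat list"

definition valid_profile :: "nat \<Rightarrow> nat set \<Rightarrow> nat \<Rightarrow> profile \<Rightarrow> bool" where
  "valid_profile n P l D \<longleftrightarrow> (\<forall>i<n. \<forall>k<l. D i k \<subseteq> P)"

definition valid_instance :: "nat \<Rightarrow> nat set \<Rightarrow> nat \<Rightarrow> profile \<Rightarrow> bool" where
  "valid_instance n P l D \<longleftrightarrow> n \<ge> 1 \<and> finite P \<and> P \<noteq> {} \<and> valid_profile n P l D"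

definition valid_outcome :: "nat set \<Rightarrow> nat \<Rightarrow> outcome \<Rightarrow> bool" where
  "valid_outcome P l x \<longleftrightarrow> length x = l \<and> set x \<subseteq> P"

definition dis :: "profile \<Rightarrow> nat \<Rightarrow> nat \<Rightarrow> outcome \<Rightarrow> nat" where
  "dis D i l x = card {k. k < l \<and> x ! k \<in> D i k}"

definition max_dis :: "nat \<Rightarrow> nat \<Rightarrow> profile \<Rightarrow> outcome \<Rightarrow> nat" where
  "max_dis n l D x = Max {dis D i l x | i. i < n}"

definition is_minmax :: "nat \<Rightarrow> nat set \<Rightarrow> nat \<Rightarrow> profile \<Rightarrow> outcome \<Rightarrow> bool" where
  "is_minmax n P l D x \<longleftrightarrow> valid_outcome P l x \<and>
     (\<forall>y. valid_outcome P l y \<longrightarrow> max_dis n l D x \<le> max_dis n l D y)"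

type_synonym mechanism = "nat \<Rightarrow> nat set \<Rightarrow> nat \<Rightarrow> profile \<Rightarrow> outcome"

definition always_minmax :: "mechanism \<Rightarrow> bool" where
  "always_minmax M \<longleftrightarrow> (\<forall>n P l D. valid_instance n P l D \<longrightarrow> is_minmax n P l D (M n P l D))"

definition strategyproof :: "mechanism \<Rightarrow> bool" where
  "strategyproof M \<longleftrightarrow> (\<forall>n P l D i D'. valid_instance n P l D \<and> i < n \<and>
     valid_instance n P l (D(i := D')) \<longrightarrow>
     dis D i l (M n P l D) \<le> dis D i l (M n P l (D(i := D'))))"

end

theory Submission
  imports Defs
begin

text \<open>Agent 1 is dissatisfied at step 2 whatever
  happens, so a Min-Max outcome must spare agent 1 at step 1 by choosing project 1 there, which
  agent 0 disapproves. If agent 0 instead claims to disapprove everything at steps 0 and 2, then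
  agent 0 appears to be the worse-off agent, and Min-Max has to choose project 0 at step 1:
  agent 0's true disapproval drops from 1 to 0.\<close>

lemma dis_0 [simp]: "dis D i 0 x = 0"
  by (simp add: dis_def)

lemma dis_Suc [simp]: "dis D i (Suc l) x = dis D i l x + (if x ! l \<in> D i l then 1 else 0)"
proof -
  have "{k. k < Suc l \<and> x ! k \<in> D i k} =
      (if x ! l \<in> D i l then insert l else id) {k. k < l \<and> x ! k \<in> D i k}"
    by (auto simp: less_Suc_eq)
  then show ?thesis
    by (simp add: dis_def)
qed

lemma dis_three: "dis D i 3 x =
    (if x ! 0 \<in> D i 0 then 1 else 0) + (if x ! 1 \<in> D i 1 then 1 else 0) +
    (if x ! 2 \<in> D i 2 then 1 else 0)"
  by (simp add: numeral_3_eq_3 numeral_2_eq_2)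

lemma dis_le_max_dis:
  assumes "i < n"
  shows "dis D i l x \<le> max_dis n l D x"
proof -
  have "finite {dis D i l x | i. i < n}"
    by simp
  then show ?thesis
    unfolding max_dis_def using assms by (intro Max_ge) auto
qed

lemma max_dis_two_agents: "max_dis 2 l D x = max (dis D 0 l x) (dis D 1 l x)"
proof -
  have "{dis D i l x | i. i < (2::nat)} = {dis D 0 l x, dis D 1 l x}"
    by (auto simp: less_Suc_eq numeral_2_eq_2)
  then show ?thesis
    by (simp add: max_dis_def)
qed

lemma minmax_dis_le:
  assumes "is_minmax n P l D x" "valid_outcome P l y" "i < n"
  shows "dis D i l x \<le> max_dis n l D y"
  using assms dis_le_max_dis[of i n D l x] unfolding is_minmax_def by (meson order_trans)

lemma valid_outcome_nth: "valid_outcome P l x \<Longrightarrow> k < l \<Longrightarrow> x ! k \<in> P"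
  unfolding valid_outcome_def by auto

definition example_profile :: profile where
  "example_profile i k =
     (if i = 0 then (if k = 1 then {1} else {})
      else if k = 1 then {0} else if k = 2 then {0, 1} else {})"

definition example_misreport :: "nat \<Rightarrow> nat set" where
  "example_misreport k = (if k = 1 then {1} else {0, 1})"

lemma example_valid_instances:
  "valid_instance 2 {0, 1} 3 example_profile"
  "valid_instance 2 {0, 1} 3 (example_profile(0 := example_misreport))"
  unfolding valid_instance_def valid_profile_def example_profile_def example_misreport_def
  by auto

lemma example_minmax_chooses_1:
  assumes "is_minmax 2 {0, 1} 3 example_profile x"
  shows "x ! 1 = 1"
proof -
  have valid: "valid_outcome {0, 1} 3 x"
    using assms by (simp add: is_minmax_def)
  have "dis example_profile 1 3 x \<le> max_dis 2 3 example_profile [0, 1, 0]"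
    by (rule minmax_dis_le[OF assms]) (simp_all add: valid_outcome_def)
  also have "\<dots> = 1"
    by (simp add: max_dis_two_agents dis_three example_profile_def)
  finally show ?thesis
    using valid_outcome_nth[OF valid, of 1] valid_outcome_nth[OF valid, of 2]
    by (auto simp: dis_three example_profile_def)
qed

lemma example_misreport_minmax_chooses_0:
  assumes "is_minmax 2 {0, 1} 3 (example_profile(0 := example_misreport)) z"
  shows "z ! 1 = 0"
proof -
  have valid: "valid_outcome {0, 1} 3 z"
    using assms by (simp add: is_minmax_def)
  have "dis (example_profile(0 := example_misreport)) 0 3 z \<le>
      max_dis 2 3 (example_profile(0 := example_misreport)) [0, 0, 0]"
    by (rule minmax_dis_le[OF assms]) (simp_all add: valid_outcome_def)
  also have "\<dots> = 2"
    by (simp add: max_dis_two_agents dis_three example_profile_def example_misreport_def)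
  finally show ?thesis
    using valid_outcome_nth[OF valid, of 0] valid_outcome_nth[OF valid, of 1]
      valid_outcome_nth[OF valid, of 2]
    by (auto simp: dis_three example_misreport_def)
qed

theorem proposition2:
  fixes M :: mechanism
  assumes "always_minmax M"
  shows "\<exists>n P l D i D'. valid_instance n P l D \<and> i < n \<and>
           valid_instance n P l (D(i := D')) \<and>
           dis D i l (M n P l (D(i := D'))) < dis D i l (M n P l D)"
proof -
  let ?D = example_profile and ?D' = "example_profile(0 := example_misreport)"
  have "M 2 {0, 1} 3 ?D ! 1 = 1"
    using assms example_valid_instances(1)
    by (intro example_minmax_chooses_1) (simp add: always_minmax_def)
  moreover have "M 2 {0, 1} 3 ?D' ! 1 = 0"
    using assms example_valid_instances(2)
    by (intro example_misreport_minmax_chooses_0) (simp add: always_minmax_def)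
  ultimately have "dis ?D 0 3 (M 2 {0, 1} 3 ?D') < dis ?D 0 3 (M 2 {0, 1} 3 ?D)"
    by (simp add: dis_three example_profile_def)
  with example_valid_instances show ?thesis
    by (intro exI[of _ 2] exI[of _ "{0, 1}"] exI[of _ 3] exI[of _ ?D] exI[of _ 0]
        exI[of _ example_misreport]) simp
qed

end
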